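(* Let $p=2$. For every $\boldsymbol\lambda\in\mathbb Q^2$, \[ \mathbb{G}_{\boldsymbol{\lambda}}(\tau)= \sum_{\mathbf n\in\mathbb N_0^2} q^{2Q\left(\mathbf{n}+\boldsymbol{\lambda}+\left(\frac12,\frac12\right)\right)} -\sum_{n_2>n_1\geq 0} q^{2Q\left(\mathbf{n}+\boldsymbol{\lambda}+\left(\frac12,\, 0\right)\right)} -\sum_{n_1>n_2\geq 0} q^{2Q\left(\mathbf{n}+\boldsymbol{\lambda}+\left(0,\frac12\right)\right)}. \]
   Context: $q:=e^{2\pi i\tau}$, $\tau\in\mathbb H$. $Q(\mathbf n):=n_1^2+n_2^2-n_1n_2$; $\mathbb N=\{1,2,\dots\}$, $\mathbb N_0=\{0,1,2,\dots\}$; the sums over $n_2>n_1\ge0$ etc. are over integer pairs $\mathbf n=(n_1,n_2)$. With $p=2$, for $\boldsymbol{\lambda}\in\mathbb Q^2$, \begin{multline*} \mathbb{G}_{\boldsymbol{\lambda}}(\tau):=\sum_{\mathbf{n} \in \mathbb N^2} {\rm min}(n_1,n_2)\,q^{2 Q\left(\mathbf n+\boldsymbol{\lambda}- \left(\frac12, \frac12\right)\right)} \Big(1-q^{2\left(n_1+\lambda_1\right)-\left(n_2+\lambda_2\right)}-q^{2\left(n_2+\lambda_2\right)-\left(n_1+\lambda_1\right)}\\+q^{3\left(n_1+\lambda_1\right)}+q^{3\left(n_2+\lambda_2\right)}-q^{2\left(n_1+\lambda_1\right)+2\left(n_2+\lambda_2\right)}\Big). \end{multline*} *)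

theory Defs
  imports "HOL-Analysis.Analysis"
begin

text \<open>q^x := e^{2 pi i tau x} for real exponent x (q = e^{2 pi i tau}).\<close>
definition qpow :: "complex \<Rightarrow> real \<Rightarrow> complex" where
  "qpow \<tau> x = exp (2 * of_real pi * \<i> * \<tau> * of_real x)"

definition Qf :: "real \<Rightarrow> real \<Rightarrow> real" where
  "Qf x1 x2 = x1^2 + x2^2 - x1 * x2"

text \<open>The function G_lambda(tau) for p = 2, summed over n in N^2 (N = {1,2,...}).\<close>
definition GG :: "real \<Rightarrow> real \<Rightarrow> complex \<Rightarrow> complex" where
  "GG l1 l2 \<tau> = infsum (\<lambda>(n1, n2).
     of_nat (min n1 n2) * qpow \<tau> (2 * Qf (real n1 + l1 - 1/2) (real n2 + l2 - 1/2)) *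
     (1 - qpow \<tau> (2 * (real n1 + l1) - (real n2 + l2))
        - qpow \<tau> (2 * (real n2 + l2) - (real n1 + l1))
        + qpow \<tau> (3 * (real n1 + l1)) + qpow \<tau> (3 * (real n2 + l2))
        - qpow \<tau> (2 * (real n1 + l1) + 2 * (real n2 + l2))))
     ({1..} \<times> {1..} :: (nat \<times> nat) set)"

end

theory Submission
  imports Defs
begin

(* Expanding the bracket and completing the square turns the six terms of the summand of G
   into min(n1, n2) q^(2 Q(n + mu)) for six half-integer shifts mu of lambda, which pair up into
   three differences.  Shifting the summation index of one member of each pair by (1,1), (1,0)
   or (0,1) changes min(n1, n2) by 1, by [n1 < n2] or by [n2 < n1], so each difference collapses
   to one of the three theta-type series on the right.  Everything converges absolutely since Q is
   positive definite and Im tau > 0. *)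

lemma qpow_add: "qpow \<tau> x * qpow \<tau> y = qpow \<tau> (x + y)"
  unfolding qpow_def by (simp add: exp_add[symmetric] algebra_simps)

lemma norm_qpow: "norm (qpow \<tau> x) = exp (- 2 * pi * Im \<tau> * x)"
  unfolding qpow_def by (simp add: norm_exp_eq_Re)

lemma Qf_ge_half_sum_squares: "Qf x y \<ge> (x\<^sup>2 + y\<^sup>2) / 2"
proof -
  have "Qf x y = (x\<^sup>2 + y\<^sup>2) / 2 + (x - y)\<^sup>2 / 2"
    unfolding Qf_def by (simp add: power2_eq_square field_simps)
  thus ?thesis by simp
qed

lemma min_Suc_left: "min (Suc m) n = min m n + (if m < n then 1 else 0)"
  by simp

lemma min_Suc_right: "min m (Suc n) = min m n + (if n < m then 1 else 0)"
  by simp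

lemma summable_on_diff:
  fixes f g :: "'a \<Rightarrow> 'b::topological_ab_group_add"
  assumes "f summable_on A" "g summable_on A"
  shows "(\<lambda>x. f x - g x) summable_on A"
  using summable_on_add[OF assms(1) summable_on_uminus[THEN iffD2, OF assms(2)]] by simp

lemma infsum_diff:
  fixes f g :: "'a \<Rightarrow> 'b::{topological_ab_group_add, t2_space}"
  assumes "f summable_on A" "g summable_on A"
  shows "infsum (\<lambda>x. f x - g x) A = infsum f A - infsum g A"
  using infsum_add[OF assms(1) summable_on_uminus[THEN iffD2, OF assms(2)]] by (simp add: infsum_uminus)

lemma infsum_if_UNIV:
  fixes f :: "'a \<Rightarrow> 'b::{comm_monoid_add, t2_space}"
  shows "infsum (\<lambda>x. if P x then f x else 0) UNIV = infsum f {x. P x}"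
  by (rule infsum_cong_neutral) auto

lemma summable_on_if_UNIV:
  fixes f :: "'a \<Rightarrow> 'b::{comm_monoid_add, topological_space}"
  shows "(\<lambda>x. if P x then f x else 0) summable_on UNIV \<longleftrightarrow> f summable_on {x. P x}"
  by (rule summable_on_cong_neutral) auto

lemma infsum_reindex_split:
  fixes f g r :: "'a \<Rightarrow> 'b::{topological_comm_monoid_add, t2_space}"
  assumes "inj h" and "\<And>x. x \<notin> range h \<Longrightarrow> f x = 0" and "\<And>x. f (h x) = g x + r x"
    and "g summable_on UNIV" and "r summable_on UNIV"
  shows "infsum f UNIV = infsum g UNIV + infsum r UNIV"
proof -
  have "infsum f UNIV = infsum f (range h)"
    by (rule infsum_cong_neutral) (use assms(2) in auto)
  also have "\<dots> = infsum (f \<circ> h) UNIV"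
    by (rule infsum_reindex) (use assms(1) in simp)
  also have "\<dots> = infsum g UNIV + infsum r UNIV"
    using infsum_add[OF assms(4,5)] by (simp add: comp_def assms(3))
  finally show ?thesis .
qed

lemma summable_on_product_nonneg:
  fixes f g :: "'a \<Rightarrow> real"
  assumes "f summable_on UNIV" "g summable_on UNIV" "\<And>x. f x \<ge> 0" "\<And>y. g y \<ge> 0"
  shows "(\<lambda>(x, y). f x * g y) summable_on UNIV"
proof -
  have "(\<lambda>p. f (fst p) * g (snd p)) summable_on Sigma UNIV (\<lambda>_. UNIV)"
  proof (rule summable_on_SigmaI[where g = "\<lambda>x. f x * infsum g UNIV"])
    show "((\<lambda>y. f (fst (x, y)) * g (snd (x, y))) has_sum f x * infsum g UNIV) UNIV" for x
      using has_sum_cmult_right[OF has_sum_infsum[OF assms(2)]] by simp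
  qed (use assms in \<open>auto intro: summable_on_cmult_left\<close>)
  thus ?thesis by (simp add: case_prod_beta')
qed

lemma summable_on_exp_neg_nat: "(\<lambda>n::nat. exp (- real n)) summable_on UNIV"
proof (rule summable_nonneg_imp_summable_on)
  have "summable (\<lambda>n. exp (-1::real) ^ n)" by (rule summable_geometric) simp
  thus "summable (\<lambda>n::nat. exp (- real n))"
    by (simp flip: exp_of_nat_mult)
qed simp

lemma weight_exp_Qf_le:
  fixes c s t :: real
  assumes "c > 0"
  shows "(real n1 + real n2 + 1) * exp (- c * Qf (real n1 + s) (real n2 + t))
    \<le> exp (2 * \<bar>s\<bar> + 2 * \<bar>t\<bar> + 4 / c) * (exp (- real n1) * exp (- real n2))"
proof -
  have square_bound: "c / 2 * z\<^sup>2 \<ge> 2 * z - 2 / c" for z :: real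
  proof -
    have "c / 2 * z\<^sup>2 = 2 * z - 2 / c + c / 2 * (z - 2 / c)\<^sup>2"
      using assms by (simp add: power2_eq_square field_simps)
    thus ?thesis using assms by simp
  qed
  define N where "N = real n1 + real n2"
  have "c * Qf (real n1 + s) (real n2 + t) \<ge> 2 * N - (2 * \<bar>s\<bar> + 2 * \<bar>t\<bar> + 4 / c)"
    using mult_left_mono[OF Qf_ge_half_sum_squares, of c "real n1 + s" "real n2 + t"] assms
      square_bound[of "real n1 + s"] square_bound[of "real n2 + t"]
    unfolding N_def by (simp add: algebra_simps)
  moreover have "N + 1 \<le> exp N"
    using exp_ge_add_one_self[of N] by linarith
  ultimately have "(N + 1) * exp (- c * Qf (real n1 + s) (real n2 + t))
      \<le> exp N * exp ((2 * \<bar>s\<bar> + 2 * \<bar>t\<bar> + 4 / c) - 2 * N)"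
    by (intro mult_mono) auto
  also have "\<dots> = exp (2 * \<bar>s\<bar> + 2 * \<bar>t\<bar> + 4 / c) * (exp (- real n1) * exp (- real n2))"
    unfolding N_def by (simp flip: exp_add add: algebra_simps)
  finally show ?thesis unfolding N_def .
qed

lemma summable_on_weighted_theta:
  fixes w :: "nat \<times> nat \<Rightarrow> complex"
  assumes "Im \<tau> > 0" and w: "\<And>n1 n2. norm (w (n1, n2)) \<le> real n1 + real n2 + 1"
  shows "(\<lambda>(n1, n2). w (n1, n2) * qpow \<tau> (2 * Qf (real n1 + s) (real n2 + t))) summable_on UNIV"
    (is "?F summable_on UNIV")
proof -
  define c where "c = 4 * pi * Im \<tau>"
  define K where "K = exp (2 * \<bar>s\<bar> + 2 * \<bar>t\<bar> + 4 / c)"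
  define g where "g = (\<lambda>(n1::nat, n2::nat). K * (exp (- real n1) * exp (- real n2)))"
  have "c > 0" using assms(1) unfolding c_def by simp
  have g: "g summable_on UNIV"
    using summable_on_cmult_right[OF summable_on_product_nonneg[OF summable_on_exp_neg_nat summable_on_exp_neg_nat]]
    by (simp add: g_def case_prod_beta')
  have bound: "norm (?F n) \<le> g n" for n
  proof -
    obtain n1 n2 where n: "n = (n1, n2)" by fastforce
    have "norm (?F n) \<le> (real n1 + real n2 + 1) * exp (- c * Qf (real n1 + s) (real n2 + t))"
      unfolding n norm_mult norm_qpow c_def case_prod_conv
      by (rule mult_mono[OF w]) (simp_all add: algebra_simps)
    also have "\<dots> \<le> g n"
      unfolding n g_def K_def case_prod_conv by (rule weight_exp_Qf_le[OF \<open>c > 0\<close>])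
    finally show ?thesis .
  qed
  have "(\<lambda>n. norm (?F n)) summable_on UNIV"
    by (rule Infinite_Sum.abs_summable_on_comparison_test'[OF g bound])
  thus ?thesis using summable_on_iff_abs_summable_on_complex by blast
qed

definition theta_term :: "complex \<Rightarrow> real \<Rightarrow> real \<Rightarrow> nat \<times> nat \<Rightarrow> complex" where
  "theta_term \<tau> a b = (\<lambda>(n1, n2). qpow \<tau> (2 * Qf (real n1 + a) (real n2 + b)))"

definition min_theta_term :: "complex \<Rightarrow> real \<Rightarrow> real \<Rightarrow> nat \<times> nat \<Rightarrow> complex" where
  "min_theta_term \<tau> a b = (\<lambda>(n1, n2). of_nat (min n1 n2) * theta_term \<tau> a b (n1, n2))"

lemma summable_on_theta_term:
  assumes "Im \<tau> > 0"
  shows "theta_term \<tau> a b summable_on A"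
proof -
  have "(\<lambda>(n1, n2). 1 * qpow \<tau> (2 * Qf (real n1 + a) (real n2 + b))) summable_on UNIV"
    by (rule summable_on_weighted_theta[OF assms]) simp
  hence "theta_term \<tau> a b summable_on UNIV"
    by (simp add: theta_term_def)
  thus ?thesis by (rule summable_on_subset) simp
qed

lemma summable_on_min_theta_term:
  assumes "Im \<tau> > 0"
  shows "min_theta_term \<tau> a b summable_on UNIV"
proof -
  have "(\<lambda>(n1, n2). of_nat (min (fst (n1, n2)) (snd (n1, n2))) * qpow \<tau> (2 * Qf (real n1 + a) (real n2 + b)))
      summable_on UNIV"
    by (rule summable_on_weighted_theta[OF assms]) simp
  thus ?thesis by (simp add: min_theta_term_def theta_term_def)
qed

lemma min_theta_term_axis: "n1 = 0 \<or> n2 = 0 \<Longrightarrow> min_theta_term \<tau> a b (n1, n2) = 0"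
  by (auto simp: min_theta_term_def)

lemma infsum_min_theta_term_diagonal_step:
  assumes "Im \<tau> > 0"
  shows "infsum (min_theta_term \<tau> a b) UNIV - infsum (min_theta_term \<tau> (a + 1) (b + 1)) UNIV
       = infsum (theta_term \<tau> (a + 1) (b + 1)) UNIV"
proof -
  have "infsum (min_theta_term \<tau> a b) UNIV
      = infsum (min_theta_term \<tau> (a + 1) (b + 1)) UNIV + infsum (theta_term \<tau> (a + 1) (b + 1)) UNIV"
  proof (rule infsum_reindex_split[where h = "map_prod Suc Suc"])
    show "inj (map_prod Suc Suc)" by (intro prod.inj_map inj_Suc inj_on_id)
  next
    fix x :: "nat \<times> nat" assume "x \<notin> range (map_prod Suc Suc)"
    then show "min_theta_term \<tau> a b x = 0"
      by (cases x) (metis map_prod_simp min_theta_term_axis not0_implies_Suc rangeI)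
  next
    fix x :: "nat \<times> nat"
    show "min_theta_term \<tau> a b (map_prod Suc Suc x)
        = min_theta_term \<tau> (a + 1) (b + 1) x + theta_term \<tau> (a + 1) (b + 1) x"
      by (cases x) (simp add: min_theta_term_def theta_term_def algebra_simps)
  qed (simp_all add: summable_on_min_theta_term summable_on_theta_term assms)
  thus ?thesis by simp
qed

lemma infsum_min_theta_term_fst_step:
  assumes "Im \<tau> > 0"
  shows "infsum (min_theta_term \<tau> a b) UNIV - infsum (min_theta_term \<tau> (a + 1) b) UNIV
       = infsum (theta_term \<tau> (a + 1) b) {p. snd p > fst p}"
proof -
  have "infsum (min_theta_term \<tau> a b) UNIV = infsum (min_theta_term \<tau> (a + 1) b) UNIV
      + infsum (\<lambda>p. if snd p > fst p then theta_term \<tau> (a + 1) b p else 0) UNIV"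
  proof (rule infsum_reindex_split[where h = "map_prod Suc id"])
    show "inj (map_prod Suc id)" by (intro prod.inj_map inj_Suc inj_on_id)
  next
    fix x :: "nat \<times> nat" assume "x \<notin> range (map_prod Suc id)"
    then show "min_theta_term \<tau> a b x = 0"
      by (cases x) (metis id_apply map_prod_simp min_theta_term_axis not0_implies_Suc rangeI)
  next
    fix x :: "nat \<times> nat"
    show "min_theta_term \<tau> a b (map_prod Suc id x) = min_theta_term \<tau> (a + 1) b x
        + (if snd x > fst x then theta_term \<tau> (a + 1) b x else 0)"
      by (cases x) (simp add: min_theta_term_def theta_term_def min_Suc_left min_Suc_right algebra_simps)
  qed (simp_all add: summable_on_min_theta_term summable_on_theta_term summable_on_if_UNIV assms)
  thus ?thesis by (simp add: infsum_if_UNIV)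
qed

lemma infsum_min_theta_term_snd_step:
  assumes "Im \<tau> > 0"
  shows "infsum (min_theta_term \<tau> a b) UNIV - infsum (min_theta_term \<tau> a (b + 1)) UNIV
       = infsum (theta_term \<tau> a (b + 1)) {p. fst p > snd p}"
proof -
  have "infsum (min_theta_term \<tau> a b) UNIV = infsum (min_theta_term \<tau> a (b + 1)) UNIV
      + infsum (\<lambda>p. if fst p > snd p then theta_term \<tau> a (b + 1) p else 0) UNIV"
  proof (rule infsum_reindex_split[where h = "map_prod id Suc"])
    show "inj (map_prod id Suc)" by (intro prod.inj_map inj_Suc inj_on_id)
  next
    fix x :: "nat \<times> nat" assume "x \<notin> range (map_prod id Suc)"
    then show "min_theta_term \<tau> a b x = 0"
      by (cases x) (metis id_apply map_prod_simp min_theta_term_axis not0_implies_Suc rangeI)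
  next
    fix x :: "nat \<times> nat"
    show "min_theta_term \<tau> a b (map_prod id Suc x) = min_theta_term \<tau> a (b + 1) x
        + (if fst x > snd x then theta_term \<tau> a (b + 1) x else 0)"
      by (cases x) (simp add: min_theta_term_def theta_term_def min_Suc_left min_Suc_right algebra_simps)
  qed (simp_all add: summable_on_min_theta_term summable_on_theta_term summable_on_if_UNIV assms)
  thus ?thesis by (simp add: infsum_if_UNIV)
qed

lemma qpow_Qf_completing_square:
  fixes x y :: real
  shows "qpow \<tau> (2 * Qf (x - 1/2) (y - 1/2)) *
      (1 - qpow \<tau> (2 * x - y) - qpow \<tau> (2 * y - x) + qpow \<tau> (3 * x) + qpow \<tau> (3 * y)
         - qpow \<tau> (2 * x + 2 * y))
    = (qpow \<tau> (2 * Qf (x - 1/2) (y - 1/2)) - qpow \<tau> (2 * Qf (x + 1/2) (y + 1/2)))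
    - (qpow \<tau> (2 * Qf x (y - 1/2)) - qpow \<tau> (2 * Qf x (y + 1/2)))
    - (qpow \<tau> (2 * Qf (x - 1/2) y) - qpow \<tau> (2 * Qf (x + 1/2) y))"
proof -
  have shift: "qpow \<tau> (2 * Qf (x - 1/2) (y - 1/2)) * qpow \<tau> e = qpow \<tau> (2 * Qf u v)"
    if "2 * Qf (x - 1/2) (y - 1/2) + e = 2 * Qf u v" for e u v
    unfolding qpow_add that ..
  have "qpow \<tau> (2 * Qf (x - 1/2) (y - 1/2)) * qpow \<tau> (2 * x - y) = qpow \<tau> (2 * Qf x (y - 1/2))"
    and "qpow \<tau> (2 * Qf (x - 1/2) (y - 1/2)) * qpow \<tau> (2 * y - x) = qpow \<tau> (2 * Qf (x - 1/2) y)"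
    and "qpow \<tau> (2 * Qf (x - 1/2) (y - 1/2)) * qpow \<tau> (3 * x) = qpow \<tau> (2 * Qf (x + 1/2) y)"
    and "qpow \<tau> (2 * Qf (x - 1/2) (y - 1/2)) * qpow \<tau> (3 * y) = qpow \<tau> (2 * Qf x (y + 1/2))"
    and "qpow \<tau> (2 * Qf (x - 1/2) (y - 1/2)) * qpow \<tau> (2 * x + 2 * y) = qpow \<tau> (2 * Qf (x + 1/2) (y + 1/2))"
    by (rule shift, simp add: Qf_def power2_eq_square algebra_simps)+
  thus ?thesis by (simp add: algebra_simps)
qed

lemma GG_eq_min_theta_sums:
  assumes "Im \<tau> > 0"
  shows "GG l1 l2 \<tau> =
      (infsum (min_theta_term \<tau> (l1 - 1/2) (l2 - 1/2)) UNIV - infsum (min_theta_term \<tau> (l1 + 1/2) (l2 + 1/2)) UNIV)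
    - (infsum (min_theta_term \<tau> l1 (l2 - 1/2)) UNIV - infsum (min_theta_term \<tau> l1 (l2 + 1/2)) UNIV)
    - (infsum (min_theta_term \<tau> (l1 - 1/2) l2) UNIV - infsum (min_theta_term \<tau> (l1 + 1/2) l2) UNIV)"
proof -
  let ?M = "min_theta_term \<tau>"
  have s: "?M a b summable_on UNIV" for a b
    using summable_on_min_theta_term[OF assms] .
  have "GG l1 l2 \<tau> = infsum (\<lambda>n. (?M (l1 - 1/2) (l2 - 1/2) n - ?M (l1 + 1/2) (l2 + 1/2) n)
      - (?M l1 (l2 - 1/2) n - ?M l1 (l2 + 1/2) n) - (?M (l1 - 1/2) l2 n - ?M (l1 + 1/2) l2 n)) UNIV"
    unfolding GG_def
  proof (rule infsum_cong_neutral)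
    fix n :: "nat \<times> nat" assume "n \<in> UNIV - {1..} \<times> {1..}"
    then show "(?M (l1 - 1/2) (l2 - 1/2) n - ?M (l1 + 1/2) (l2 + 1/2) n)
      - (?M l1 (l2 - 1/2) n - ?M l1 (l2 + 1/2) n) - (?M (l1 - 1/2) l2 n - ?M (l1 + 1/2) l2 n) = 0"
      by (cases n) (auto simp: min_theta_term_axis)
  next
    fix n :: "nat \<times> nat"
    show "(case n of (n1, n2) \<Rightarrow>
       of_nat (min n1 n2) * qpow \<tau> (2 * Qf (real n1 + l1 - 1/2) (real n2 + l2 - 1/2)) *
       (1 - qpow \<tau> (2 * (real n1 + l1) - (real n2 + l2))
          - qpow \<tau> (2 * (real n2 + l2) - (real n1 + l1))
          + qpow \<tau> (3 * (real n1 + l1)) + qpow \<tau> (3 * (real n2 + l2))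
          - qpow \<tau> (2 * (real n1 + l1) + 2 * (real n2 + l2))))
      = (?M (l1 - 1/2) (l2 - 1/2) n - ?M (l1 + 1/2) (l2 + 1/2) n)
      - (?M l1 (l2 - 1/2) n - ?M l1 (l2 + 1/2) n) - (?M (l1 - 1/2) l2 n - ?M (l1 + 1/2) l2 n)"
    proof -
      obtain n1 n2 where n: "n = (n1, n2)" by fastforce
      show ?thesis
        unfolding n min_theta_term_def theta_term_def case_prod_conv add.assoc[symmetric] add_diff_eq
          mult.assoc qpow_Qf_completing_square
        by (simp only: right_diff_distrib)
    qed
  qed auto
  also have "\<dots> = (infsum (?M (l1 - 1/2) (l2 - 1/2)) UNIV - infsum (?M (l1 + 1/2) (l2 + 1/2)) UNIV)
    - (infsum (?M l1 (l2 - 1/2)) UNIV - infsum (?M l1 (l2 + 1/2)) UNIV)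
    - (infsum (?M (l1 - 1/2) l2) UNIV - infsum (?M (l1 + 1/2) l2) UNIV)"
    by (simp add: infsum_diff summable_on_diff s)
  finally show ?thesis .
qed

theorem lemma3p5:
  fixes l1 l2 :: real and \<tau> :: complex
  assumes "l1 \<in> \<rat>" and "l2 \<in> \<rat>" and "Im \<tau> > 0"
  shows "GG l1 l2 \<tau> =
      infsum (\<lambda>(n1, n2). qpow \<tau> (2 * Qf (real n1 + l1 + 1/2) (real n2 + l2 + 1/2)))
        (UNIV :: (nat \<times> nat) set)
    - infsum (\<lambda>(n1, n2). qpow \<tau> (2 * Qf (real n1 + l1 + 1/2) (real n2 + l2)))
        {p :: nat \<times> nat. snd p > fst p}
    - infsum (\<lambda>(n1, n2). qpow \<tau> (2 * Qf (real n1 + l1) (real n2 + l2 + 1/2)))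
        {p :: nat \<times> nat. fst p > snd p}"
proof -
  have half: "l1 - 1/2 + 1 = l1 + 1/2" "l2 - 1/2 + 1 = l2 + 1/2"
    by simp_all
  have diagonal: "infsum (min_theta_term \<tau> (l1 - 1/2) (l2 - 1/2)) UNIV - infsum (min_theta_term \<tau> (l1 + 1/2) (l2 + 1/2)) UNIV
      = infsum (theta_term \<tau> (l1 + 1/2) (l2 + 1/2)) UNIV"
    using infsum_min_theta_term_diagonal_step[OF assms(3), of "l1 - 1/2" "l2 - 1/2"] unfolding half .
  have vertical: "infsum (min_theta_term \<tau> l1 (l2 - 1/2)) UNIV - infsum (min_theta_term \<tau> l1 (l2 + 1/2)) UNIV
      = infsum (theta_term \<tau> l1 (l2 + 1/2)) {p. fst p > snd p}"
    using infsum_min_theta_term_snd_step[OF assms(3), of l1 "l2 - 1/2"] unfolding half .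
  have horizontal: "infsum (min_theta_term \<tau> (l1 - 1/2) l2) UNIV - infsum (min_theta_term \<tau> (l1 + 1/2) l2) UNIV
      = infsum (theta_term \<tau> (l1 + 1/2) l2) {p. snd p > fst p}"
    using infsum_min_theta_term_fst_step[OF assms(3), of "l1 - 1/2" l2] unfolding half .
  show ?thesis
    unfolding GG_eq_min_theta_sums[OF assms(3)] diagonal vertical horizontal
    by (simp add: theta_term_def add.assoc)
qed

end
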